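(* Assume the no-anticipation, common-support and transition-independence conditions stated in the context. Then for every $t\ge T_0+1$, \[ \boldsymbol\mu^{\mathrm{ATT}}_t=\sum_{\mathbf x_1^{T_0}\in\mathcal X^{T_0}}\Big\{\mathbb{E}\big[\mathbf X_t\mid \mathbf X_1^{T_0}=\mathbf x_1^{T_0},D=1\big]-\mathbb{E}\big[\mathbf X_t\mid \mathbf X_1^{T_0}=\mathbf x_1^{T_0},D=0\big]\Big\}\Pr(\mathbf X_1^{T_0}=\mathbf x_1^{T_0}\mid D=1), \] where terms with $\Pr(\mathbf X_1^{T_0}=\mathbf x_1^{T_0}\mid D=1)=0$ are omitted.
   Context: Fix integers $T_0\ge1$, $T_1\ge1$, $T=T_0+T_1$, $K\ge2$, and a set of $K$ outcome categories $\mathcal Y=\{\bar y^{(1)},\dots,\bar y^{(K)}\}$. On a probability space, a unit has a binary treatment indicator $D\in\{0,1\}$ (treated units are untreated in periods $1,\dots,T_0$ and treated in periods $T_0+1,\dots,T$; control units are never treated) and potential outcomes $Y_t(0),Y_t(1)\in\mathcal Y$, $t=1,\dots,T$. For $d\in\{0,1\}$ let $\mathbf X_t(d)=(\mathbf 1(Y_t(d)=\bar y^{(1)}),\dots,\mathbf 1(Y_t(d)=\bar y^{(K)}))^\top\in\mathcal X:=\{x\in\{0,1\}^K:\sum_k x^{(k)}=1\}$. Observed outcomes: $\mathbf X_t=\mathbf X_t(0)$ for $t\le T_0$ and $\mathbf X_t=D\mathbf X_t(1)+(1-D)\mathbf X_t(0)$ for $t\ge T_0+1$. Write $\mathbf X_1^{T_0}=(\mathbf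 X_1,\dots,\mathbf X_{T_0})$, $\mathbf X_1^{T_0}(0)=(\mathbf X_1(0),\dots,\mathbf X_{T_0}(0))$, and $\boldsymbol\mu^{\mathrm{ATT}}_t=\mathbb{E}[\mathbf X_t(1)-\mathbf X_t(0)\mid D=1]$ for $t\ge T_0+1$. Conditional quantities are taken only given events of positive probability. No anticipation: $\mathbf X_t(1)=\mathbf X_t(0)$ for $t\le T_0$. Common support: there is $\epsilon>0$ with $\epsilon\le\Pr(D=1\mid\mathbf X_1^{T_0}=\mathbf x_1^{T_0})<1-\epsilon$ for every $\mathbf x_1^{T_0}$ with $\Pr(\mathbf X_1^{T_0}=\mathbf x_1^{T_0})>0$. Transition independence: for every $t\ge T_0+1$, $\mathbf x_t\in\mathcal X$, $\mathbf x_1^{T_0}\in\mathcal X^{T_0}$: $\Pr(\mathbf X_t(0)=\mathbf x_t\mid \mathbf X_1^{T_0}(0)=\mathbf x_1^{T_0},D=1)=\Pr(\mathbf X_t(0)=\mathbf x_t\mid \mathbf X_1^{T_0}(0)=\mathbf x_1^{T_0},D=0)$. *)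

theory Defs
  imports "HOL-Probability.Probability"
begin

text \<open>Outcome categories are the elements of a finite type 'k with CARD('k) = K.
  A category y is encoded by the one-hot vector onehot y in real^'k.\<close>

definition onehot :: "'k::finite \<Rightarrow> real^'k" where
  "onehot y = (\<chi> k. if y = k then 1 else 0)"

definition Xset :: "(real^'k::finite) set" where
  "Xset = {x. (\<forall>k. x $ k = 0 \<or> x $ k = 1) \<and> (\<Sum>k\<in>UNIV. x $ k) = 1}"

definition cprob :: "'a measure \<Rightarrow> 'a set \<Rightarrow> 'a set \<Rightarrow> real" where
  "cprob M A B = measure M (A \<inter> B) / measure M B"

definition cexp :: "'a measure \<Rightarrow> ('a \<Rightarrow> real^'k::finite) \<Rightarrow> 'a set \<Rightarrow> real^'k" where
  "cexp M X B = (\<chi> k. (\<integral>\<omega>. indicator B \<omega> * (X \<omega> $ k) \<partial>M) / measure M B)"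

text \<open>Potential outcome vectors X_t(d); Y d t is the category of Y_t(d).\<close>
definition Xpot :: "(bool \<Rightarrow> nat \<Rightarrow> 'a \<Rightarrow> 'k::finite) \<Rightarrow> bool \<Rightarrow> nat \<Rightarrow> 'a \<Rightarrow> real^'k" where
  "Xpot Y d t \<omega> = onehot (Y d t \<omega>)"

definition Xobs :: "nat \<Rightarrow> (bool \<Rightarrow> nat \<Rightarrow> 'a \<Rightarrow> 'k::finite) \<Rightarrow> ('a \<Rightarrow> bool) \<Rightarrow> nat \<Rightarrow> 'a \<Rightarrow> real^'k" where
  "Xobs T0 Y D t \<omega> = (if t \<le> T0 then Xpot Y False t \<omega> else Xpot Y (D \<omega>) t \<omega>)"

definition hist :: "'a measure \<Rightarrow> nat \<Rightarrow> (nat \<Rightarrow> 'a \<Rightarrow> real^'k::finite) \<Rightarrow> (nat \<Rightarrow> real^'k) \<Rightarrow> 'a set" where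
  "hist M T0 Z x = {\<omega> \<in> space M. \<forall>s\<in>{1..T0}. Z s \<omega> = x s}"

definition Hists :: "nat \<Rightarrow> (nat \<Rightarrow> real^'k::finite) set" where
  "Hists T0 = PiE {1..T0} (\<lambda>_. Xset)"

definition Dev :: "'a measure \<Rightarrow> ('a \<Rightarrow> bool) \<Rightarrow> bool \<Rightarrow> 'a set" where
  "Dev M D d = {\<omega> \<in> space M. D \<omega> = d}"

end

theory Submission
  imports Defs
begin

(* Fix a category k and condition on D = 1; both sides are then differences of conditional
   probabilities. In a stratum H of pre-treatment histories (on which observed and untreated
   outcomes agree), the treated probability P(Y_t(1) = k | H, D = 1) is observed, while the
   unobservable P(Y_t(0) = k | H, D = 1) equals its control analogue by transition independence;
   common support guarantees that this analogue is defined whenever H has treated units.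
   Weighting by P(H | D = 1) and summing over the finitely many strata, which partition the
   sample space, gives P(Y_t(1) = k | D = 1) - P(Y_t(0) = k | D = 1) by total probability. *)

lemma onehot_component: "onehot y $ k = (if y = k then 1 else 0)"
  by (simp add: onehot_def)

lemma onehot_eq_iff: "onehot a = onehot b \<longleftrightarrow> a = b"
  by (metis onehot_component zero_neq_one)

lemma onehot_in_Xset: "onehot y \<in> Xset"
  by (simp add: Xset_def onehot_component)

lemma Xset_eq_range_onehot: "Xset = range (onehot :: 'k::finite \<Rightarrow> real^'k)"
proof (intro antisym subsetI)
  fix x :: "real^'k" assume "x \<in> Xset"
  then have entries: "x $ j = (if j \<in> {i. x $ i = 1} then 1 else 0)" and sum: "(\<Sum>j\<in>UNIV. x $ j) = 1" for j
    by (auto simp: Xset_def)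
  have "card {i. x $ i = 1} = 1"
    using sum by (subst (asm) entries) (simp add: sum.If_cases)
  then obtain k where "{i. x $ i = 1} = {k}"
    by (rule card_1_singletonE)
  then have "x = onehot k"
    by (subst vec_eq_iff, subst entries) (auto simp: onehot_component)
  then show "x \<in> range onehot" by blast
qed (auto simp: onehot_in_Xset)

lemma finite_Xset: "finite (Xset :: (real^'k::finite) set)"
  by (simp add: Xset_eq_range_onehot)

lemma finite_Hists: "finite (Hists T0 :: (nat \<Rightarrow> real^'k::finite) set)"
  unfolding Hists_def by (intro finite_PiE finite_Xset) simp

lemma hist_Xobs: "hist M T0 (Xobs T0 Y D) = hist M T0 (Xpot Y False)"
  by (auto simp: fun_eq_iff hist_def Xobs_def)

lemma disjoint_family_hist:
  fixes Z :: "nat \<Rightarrow> 'a \<Rightarrow> real^'k::finite"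
  shows "disjoint_family_on (hist M T0 Z) (Hists T0)"
  unfolding disjoint_family_on_def
proof (intro ballI impI)
  fix x x' :: "nat \<Rightarrow> real^'k" assume "x \<in> Hists T0" "x' \<in> Hists T0" "x \<noteq> x'"
  then obtain s where "s \<in> {1..T0}" "x s \<noteq> x' s"
    unfolding Hists_def by (meson PiE_ext)
  then show "hist M T0 Z x \<inter> hist M T0 Z x' = {}"
    unfolding hist_def by force
qed

lemma space_eq_UN_hist:
  assumes "\<And>s \<omega>. \<omega> \<in> space M \<Longrightarrow> Z s \<omega> \<in> Xset"
  shows "space M = (\<Union>x\<in>Hists T0. hist M T0 Z x)"
proof -
  have "\<omega> \<in> hist M T0 Z (restrict (\<lambda>s. Z s \<omega>) {1..T0})" "restrict (\<lambda>s. Z s \<omega>) {1..T0} \<in> Hists T0"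
    if "\<omega> \<in> space M" for \<omega>
    using that assms by (auto simp: hist_def Hists_def)
  moreover have "hist M T0 Z x \<subseteq> space M" for x
    by (simp add: hist_def)
  ultimately show ?thesis by blast
qed

lemma sets_hist:
  assumes "\<And>s. Z s \<in> measurable M (count_space UNIV)"
  shows "hist M T0 Z x \<in> sets M"
proof -
  have "Measurable.pred M (\<lambda>\<omega>. Z s \<omega> = x s)" for s
    using assms by measurable
  then show ?thesis
    unfolding hist_def pred_def by (intro sets.sets_Collect_finite_All) auto
qed

lemma (in finite_measure) sum_measure_Int_hist:
  assumes "\<And>s. Z s \<in> measurable M (count_space UNIV)" "\<And>s \<omega>. \<omega> \<in> space M \<Longrightarrow> Z s \<omega> \<in> Xset"
    and "C \<in> sets M"
  shows "(\<Sum>x\<in>Hists T0. measure M (C \<inter> hist M T0 Z x)) = measure M C"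
proof -
  have space: "space M = (\<Union>x\<in>Hists T0. hist M T0 Z x)"
    by (rule space_eq_UN_hist) (rule assms(2))
  have "C = C \<inter> space M"
    using assms(3) by (simp add: Int_absorb2 sets.sets_into_space)
  also have "\<dots> = (\<Union>x\<in>Hists T0. C \<inter> hist M T0 Z x)"
    unfolding space by (rule Int_UN_distrib)
  finally have "measure M C = measure M (\<Union>x\<in>Hists T0. C \<inter> hist M T0 Z x)"
    by (rule arg_cong)
  also have "\<dots> = (\<Sum>x\<in>Hists T0. measure M (C \<inter> hist M T0 Z x))"
  proof (rule finite_measure_finite_Union)
    show "(\<lambda>x. C \<inter> hist M T0 Z x) ` Hists T0 \<subseteq> sets M"
      using sets_hist[of Z M T0, OF assms(1)] assms(3) by blast
    show "disjoint_family_on (\<lambda>x. C \<inter> hist M T0 Z x) (Hists T0)"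
      using disjoint_family_hist[of M T0 Z] by (rule disjoint_family_on_bisimulation) blast
  qed (rule finite_Hists)
  finally show ?thesis by (rule sym)
qed

lemma Xpot_in_Xset: "Xpot Y d t \<omega> \<in> Xset"
  by (simp add: Xpot_def onehot_in_Xset)

lemma Xpot_eq_onehot_iff: "Xpot Y d t \<omega> = onehot k \<longleftrightarrow> Y d t \<omega> = k"
  by (simp add: Xpot_def onehot_eq_iff)

lemma measurable_Xpot:
  "Y d t \<in> measurable M (count_space UNIV) \<Longrightarrow> Xpot Y d t \<in> measurable M (count_space UNIV)"
  unfolding Xpot_def by (rule measurable_compose[where N = "count_space UNIV"]) simp_all

lemma Xobs_after_treatment: "T0 < t \<Longrightarrow> Xobs T0 Y D t \<omega> = Xpot Y (D \<omega>) t \<omega>"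
  by (simp add: Xobs_def)

lemma Dev_False: "Dev M D False = space M - Dev M D True"
  by (auto simp: Dev_def)

lemma cexp_cong: "(\<And>\<omega>. \<omega> \<in> C \<Longrightarrow> X \<omega> = X' \<omega>) \<Longrightarrow> cexp M X C = cexp M X' C"
  unfolding cexp_def vec_eq_iff
  by (auto intro!: arg_cong[where f = "\<lambda>r. r / _"] Bochner_Integration.integral_cong split: split_indicator)

lemma cexp_diff:
  fixes X X' :: "'a \<Rightarrow> real^'k::finite"
  assumes "C \<in> sets M" "\<And>k. integrable M (\<lambda>\<omega>. X \<omega> $ k)" "\<And>k. integrable M (\<lambda>\<omega>. X' \<omega> $ k)"
  shows "cexp M (\<lambda>\<omega>. X \<omega> - X' \<omega>) C = cexp M X C - cexp M X' C"
proof -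
  have "integrable M (\<lambda>\<omega>. indicator C \<omega> * V \<omega> $ k)"
    if "\<And>k. integrable M (\<lambda>\<omega>. V \<omega> $ k)" for V :: "'a \<Rightarrow> real^'k" and k
    using integrable_real_mult_indicator[OF assms(1) that[of k]] by (simp add: mult.commute)
  with assms(2,3) show ?thesis
    by (simp add: cexp_def vec_eq_iff right_diff_distrib diff_divide_distrib)
qed

lemma cexp_onehot_component:
  "cexp M (\<lambda>\<omega>. onehot (Z \<omega>)) C $ k = cprob M {\<omega>\<in>space M. Z \<omega> = k} C"
proof -
  have "indicator C \<omega> * onehot (Z \<omega>) $ k = indicator ({\<omega>. Z \<omega> = k} \<inter> C) \<omega>" for \<omega>
    by (simp add: onehot_component split: split_indicator)
  then show ?thesis
    by (simp add: cexp_def cprob_def Int_ac Collect_conj_eq)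
qed

lemma (in finite_measure) integrable_onehot_component:
  "Z \<in> measurable M (count_space UNIV) \<Longrightarrow> integrable M (\<lambda>\<omega>. onehot (Z \<omega>) $ k)"
  by (rule integrable_const_bound[where B = 1]) (auto simp: onehot_component)

lemma (in finite_measure) cprob_mult_cprob:
  assumes "A \<in> sets M" "B \<in> sets M"
  shows "cprob M A B * cprob M E (A \<inter> B) = cprob M (E \<inter> A) B"
proof (cases "measure M (A \<inter> B) = 0")
  case True
  have "measure M (E \<inter> A \<inter> B) \<le> measure M (A \<inter> B)"
    using assms by (intro finite_measure_mono) auto
  with True show ?thesis
    by (simp add: cprob_def Int_assoc measure_le_0_iff)
qed (simp add: cprob_def Int_assoc)

lemma (in finite_measure) measure_Diff_pos:
  assumes "A \<in> sets M" "B \<in> sets M" "0 < measure M (A \<inter> B)" "cprob M B A < 1"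
  shows "0 < measure M (A - B)"
proof -
  have "measure M (A \<inter> B) \<le> measure M A"
    using assms(1) by (intro finite_measure_mono) auto
  with assms(3,4) have "measure M (A \<inter> B) < measure M A"
    by (simp add: cprob_def Int_commute divide_less_eq split: if_splits)
  with assms(1,2) show ?thesis
    by (simp add: finite_measure_Diff')
qed

locale treatment_model = prob_space M
  for M :: "'a measure" and Y :: "bool \<Rightarrow> nat \<Rightarrow> 'a \<Rightarrow> 'k::finite" and D :: "'a \<Rightarrow> bool" +
  assumes measurable_D: "D \<in> measurable M (count_space UNIV)"
    and measurable_Y: "Y d t \<in> measurable M (count_space UNIV)"
begin

lemma sets_Dev: "Dev M D d \<in> sets M"
  using measurable_D unfolding Dev_def by measurable

lemma sets_category: "{\<omega>\<in>space M. Y d t \<omega> = k} \<in> sets M"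
  using measurable_Y by measurable

lemma sets_hist_Xpot: "hist M T0 (Xpot Y d) x \<in> sets M"
  by (intro sets_hist measurable_Xpot measurable_Y)

lemma sum_cprob_Int_hist:
  assumes "E \<in> sets M" "B \<in> sets M"
  shows "(\<Sum>x\<in>Hists T0. cprob M (E \<inter> hist M T0 (Xpot Y False) x) B) = cprob M E B"
proof -
  have "(\<Sum>x\<in>Hists T0. measure M (E \<inter> B \<inter> hist M T0 (Xpot Y False) x)) = measure M (E \<inter> B)"
    using assms by (intro sum_measure_Int_hist measurable_Xpot measurable_Y Xpot_in_Xset) auto
  then show ?thesis
    by (simp add: cprob_def Int_ac flip: sum_divide_distrib)
qed

lemma cexp_Xobs_component:
  assumes "T0 < t" "C \<subseteq> Dev M D d"
  shows "cexp M (Xobs T0 Y D t) C $ k = cprob M {\<omega>\<in>space M. Y d t \<omega> = k} C"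
proof -
  have "cexp M (Xobs T0 Y D t) C = cexp M (\<lambda>\<omega>. onehot (Y d t \<omega>)) C"
    using assms by (intro cexp_cong) (auto simp: Xobs_after_treatment Xpot_def Dev_def)
  then show ?thesis
    by (simp add: cexp_onehot_component)
qed

lemma cexp_effect_component:
  assumes "C \<in> sets M"
  shows "cexp M (\<lambda>\<omega>. Xpot Y True t \<omega> - Xpot Y False t \<omega>) C $ k
    = cprob M {\<omega>\<in>space M. Y True t \<omega> = k} C - cprob M {\<omega>\<in>space M. Y False t \<omega> = k} C"
  using assms unfolding Xpot_def
  by (simp add: cexp_diff integrable_onehot_component measurable_Y cexp_onehot_component)

lemma positive_control_mass:
  assumes "H \<in> sets M" "0 < measure M (H \<inter> Dev M D True)"
    and "0 < measure M H \<Longrightarrow> cprob M (Dev M D True) H < 1"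
  shows "0 < measure M (H \<inter> Dev M D False)"
proof -
  have "measure M (H \<inter> Dev M D True) \<le> measure M H"
    using assms(1) by (intro finite_measure_mono) auto
  with assms have "0 < measure M (H - Dev M D True)"
    by (intro measure_Diff_pos sets_Dev) auto
  moreover have "H \<inter> Dev M D False = H - Dev M D True"
    using sets.sets_into_space[OF assms(1)] by (auto simp: Dev_False)
  ultimately show ?thesis by simp
qed

lemma stratum_contrast_component:
  assumes "T0 < t" "H \<in> sets M"
    and overlap: "0 < measure M (H \<inter> Dev M D True) \<Longrightarrow> 0 < measure M (H \<inter> Dev M D False)"
    and trans_indep: "0 < measure M (H \<inter> Dev M D True) \<Longrightarrow> 0 < measure M (H \<inter> Dev M D False) \<Longrightarrow>
      cprob M {\<omega>\<in>space M. Y False t \<omega> = k} (H \<inter> Dev M D True)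
      = cprob M {\<omega>\<in>space M. Y False t \<omega> = k} (H \<inter> Dev M D False)"
  shows "(cprob M H (Dev M D True) *\<^sub>R
      (cexp M (Xobs T0 Y D t) (H \<inter> Dev M D True) - cexp M (Xobs T0 Y D t) (H \<inter> Dev M D False))) $ k
    = cprob M ({\<omega>\<in>space M. Y True t \<omega> = k} \<inter> H) (Dev M D True)
      - cprob M ({\<omega>\<in>space M. Y False t \<omega> = k} \<inter> H) (Dev M D True)"
proof -
  let ?E = "\<lambda>d. {\<omega>\<in>space M. Y d t \<omega> = k}" and ?B = "Dev M D"
  \<comment> \<open>A stratum without treated mass has weight zero, so transition independence is
    needed only where both groups are present.\<close>
  have "cprob M H (?B True) * cprob M (?E False) (H \<inter> ?B False)
      = cprob M H (?B True) * cprob M (?E False) (H \<inter> ?B True)"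
  proof (cases "0 < measure M (H \<inter> ?B True)")
    case False
    then have "cprob M H (?B True) = 0"
      by (simp add: cprob_def zero_less_measure_iff)
    then show ?thesis by simp
  qed (simp add: overlap trans_indep)
  moreover have "cprob M H (?B True) * cprob M (?E d) (H \<inter> ?B True) = cprob M (?E d \<inter> H) (?B True)" for d
    using assms(2) sets_Dev by (rule cprob_mult_cprob)
  moreover have "cexp M (Xobs T0 Y D t) (H \<inter> ?B d) $ k = cprob M (?E d) (H \<inter> ?B d)" for d
    using assms(1) by (rule cexp_Xobs_component) simp
  ultimately show ?thesis
    by (simp add: right_diff_distrib)
qed

end

theorem corollary1:
  fixes M :: "'a measure"
    and T0 T1 T :: nat
    and Y :: "bool \<Rightarrow> nat \<Rightarrow> 'a \<Rightarrow> 'k::finite"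
    and D :: "'a \<Rightarrow> bool"
  assumes "prob_space M"
    and "T0 \<ge> 1" and "T1 \<ge> 1" and "T = T0 + T1"
    and "CARD('k) \<ge> 2"
    and "D \<in> measurable M (count_space UNIV)"
    and "\<And>d t. Y d t \<in> measurable M (count_space UNIV)"
    \<comment> \<open>no anticipation\<close>
    and no_anticipation: "\<forall>t\<in>{1..T0}. \<forall>\<omega>\<in>space M. Xpot Y True t \<omega> = Xpot Y False t \<omega>"
    \<comment> \<open>common support\<close>
    and common_support: "\<exists>\<epsilon>>0. \<forall>x\<in>Hists T0.
          measure M (hist M T0 (Xobs T0 Y D) x) > 0 \<longrightarrow>
            \<epsilon> \<le> cprob M (Dev M D True) (hist M T0 (Xobs T0 Y D) x)
            \<and> cprob M (Dev M D True) (hist M T0 (Xobs T0 Y D) x) < 1 - \<epsilon>"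
    \<comment> \<open>transition independence\<close>
    and transition_independence: "\<forall>t\<in>{T0+1..T}. \<forall>xt\<in>Xset. \<forall>x\<in>Hists T0.
          measure M (hist M T0 (Xpot Y False) x \<inter> Dev M D True) > 0 \<and>
          measure M (hist M T0 (Xpot Y False) x \<inter> Dev M D False) > 0 \<longrightarrow>
          cprob M {\<omega>\<in>space M. Xpot Y False t \<omega> = xt} (hist M T0 (Xpot Y False) x \<inter> Dev M D True)
          = cprob M {\<omega>\<in>space M. Xpot Y False t \<omega> = xt} (hist M T0 (Xpot Y False) x \<inter> Dev M D False)"
  shows "\<forall>t\<in>{T0+1..T}.
    cexp M (\<lambda>\<omega>. Xpot Y True t \<omega> - Xpot Y False t \<omega>) (Dev M D True)
    = (\<Sum>x\<in>{x\<in>Hists T0. cprob M (hist M T0 (Xobs T0 Y D) x) (Dev M D True) \<noteq> 0}.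
        cprob M (hist M T0 (Xobs T0 Y D) x) (Dev M D True) *\<^sub>R
        (cexp M (Xobs T0 Y D t) (hist M T0 (Xobs T0 Y D) x \<inter> Dev M D True)
         - cexp M (Xobs T0 Y D t) (hist M T0 (Xobs T0 Y D) x \<inter> Dev M D False)))"
proof (unfold hist_Xobs, intro ballI iffD2[OF vec_eq_iff] allI)
  fix t k assume t: "t \<in> {T0+1..T}"
  interpret treatment_model M Y D
    using assms(1,6,7) by (simp add: treatment_model_def treatment_model_axioms_def)
  let ?H = "hist M T0 (Xpot Y False)" and ?B = "Dev M D" and ?E = "\<lambda>d. {\<omega>\<in>space M. Y d t \<omega> = k}"
  let ?contrast = "\<lambda>x. cprob M (?H x) (?B True) *\<^sub>R
    (cexp M (Xobs T0 Y D t) (?H x \<inter> ?B True) - cexp M (Xobs T0 Y D t) (?H x \<inter> ?B False))"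
  \<comment> \<open>Only the upper bound in common support matters: it puts control units into every history
    stratum that contains treated ones. No anticipation is already built into the definition of Xobs.\<close>
  obtain \<epsilon> where "\<epsilon> > 0"
    and support: "\<forall>x\<in>Hists T0. 0 < measure M (?H x) \<longrightarrow> cprob M (?B True) (?H x) < 1 - \<epsilon>"
    using common_support by (auto simp: hist_Xobs)
  have contrast: "?contrast x $ k = cprob M (?E True \<inter> ?H x) (?B True) - cprob M (?E False \<inter> ?H x) (?B True)"
    if x: "x \<in> Hists T0" for x
  proof (rule stratum_contrast_component)
    show "0 < measure M (?H x \<inter> ?B True) \<Longrightarrow> 0 < measure M (?H x \<inter> ?B False)"
      using support x \<open>\<epsilon> > 0\<close> by (intro positive_control_mass sets_hist_Xpot) auto
    show "cprob M (?E False) (?H x \<inter> ?B True) = cprob M (?E False) (?H x \<inter> ?B False)"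
      if "0 < measure M (?H x \<inter> ?B True)" "0 < measure M (?H x \<inter> ?B False)"
      using transition_independence[rule_format, OF t onehot_in_Xset x] that
      by (simp add: Xpot_eq_onehot_iff)
  qed (use t sets_hist_Xpot in auto)
  have "cexp M (\<lambda>\<omega>. Xpot Y True t \<omega> - Xpot Y False t \<omega>) (?B True) $ k
      = cprob M (?E True) (?B True) - cprob M (?E False) (?B True)"
    using sets_Dev by (rule cexp_effect_component)
  also have "\<dots> = (\<Sum>x\<in>Hists T0. cprob M (?E True \<inter> ?H x) (?B True) - cprob M (?E False \<inter> ?H x) (?B True))"
    by (simp add: sum_subtractf sum_cprob_Int_hist sets_category sets_Dev)
  also have "\<dots> = (\<Sum>x\<in>Hists T0. ?contrast x $ k)"
    using contrast by simp
  also have "\<dots> = (\<Sum>x\<in>{x\<in>Hists T0. cprob M (?H x) (?B True) \<noteq> 0}. ?contrast x) $ k"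
    unfolding sum_component by (rule sum.mono_neutral_right[OF finite_Hists]) auto
  finally show "cexp M (\<lambda>\<omega>. Xpot Y True t \<omega> - Xpot Y False t \<omega>) (?B True) $ k
      = (\<Sum>x\<in>{x\<in>Hists T0. cprob M (?H x) (?B True) \<noteq> 0}. ?contrast x) $ k" .
qed

end
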